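(* Let $p\in\mathbb{Z}[X]$ be a non-constant polynomial with nonnegative coefficients, and let $n_k=p(k)$ for $k\ge0$. Then $(n_k)_{k\ge0}$ is not a rigidity sequence: there is no continuous Borel probability measure $\sigma$ on $\mathbb{T}$ with $\hat\sigma(n_k)\to1$.
   Context: $\hat\sigma(n)=\int_{\mathbb{T}}\lambda^n\,d\sigma(\lambda)$; continuous means atomless. A strictly increasing sequence $(n_k)$ of positive integers is a rigidity sequence if there exist a probability space and a measure-preserving transformation $\varphi$ that is weakly mixing and rigid with respect to $(n_k)$ (i.e. $\mu(\varphi^{-n_k}(A)\triangle A)\to0$ for all measurable $A$); equivalently, if there exists a continuous probability measure $\sigma$ on $\mathbb{T}$ with $\hat\sigma(n_k)\to1$. *)

theory Defs
  imports "HOL-Probability.Probability" "HOL-Computational_Algebra.Polynomial"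
begin

text \<open>A continuous Borel probability measure on T: a probability measure on the Borel
  sets of the complex plane, concentrated on the unit circle, without atoms.\<close>
definition continuous_prob_on_circle :: "complex measure \<Rightarrow> bool" where
  "continuous_prob_on_circle \<sigma> \<longleftrightarrow>
     prob_space \<sigma> \<and> sets \<sigma> = sets borel \<and>
     emeasure \<sigma> (UNIV - sphere 0 1) = 0 \<and>
     (\<forall>z. emeasure \<sigma> {z} = 0)"

definition fourier_coeff :: "complex measure \<Rightarrow> int \<Rightarrow> complex" where
  "fourier_coeff \<sigma> n = (\<integral>z. z powi n \<partial>\<sigma>)"

end

theory Submission imports Defs begin

(* For a probability measure sigma on the circle put
     D(m) = integral of |z^m - 1|^2 d sigma = 2 - 2 Re(sigma^(m)),
   so sigma^(n_k) --> 1 iff D(n_k) --> 0.  Since |z^(a-b) - 1| <= |z^a - 1| + |z^b - 1|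
   on the circle, D is a "quasi-norm" on the integers:
     D >= 0,   D(a - b) <= 2 D(a) + 2 D(b),   and   D(c) = 0 only for c = 0,
   the last because D(c) = 0 forces sigma onto the finitely many c-th roots of unity,
   impossible for an atomless measure.
   The combinatorial core is that no quasi-norm tends to 0 along the values of a
   non-constant integer polynomial q: otherwise it also tends to 0 along the forward
   difference q(k+1) - q(k), a polynomial of smaller degree; iterating reaches a
   polynomial of degree 0, i.e. a constant c, which is 0 (impossible, since then the
   previous polynomial would be constant on the naturals) or gives D(c) = 0 with c <> 0.
   The file first proves this core for abstract quasi-norms, then shows that the
   defect of a continuous measure is one, and derives the theorem. *)

definition forward_diff :: "'a::comm_ring_1 poly \<Rightarrow> 'a poly" where
  "forward_diff q = pcompose q [:1, 1:] - q"

lemma poly_forward_diff: "poly (forward_diff q) x = poly q (x + 1) - poly q x"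
  by (simp add: forward_diff_def poly_pcompose algebra_simps)

text \<open>Taking a forward difference lowers the degree of a non-constant polynomial,
  since \<open>q(x+1)\<close> and \<open>q(x)\<close> have the same leading coefficient.\<close>
lemma degree_forward_diff_less:
  fixes q :: "'a::idom poly"
  assumes "degree q > 0"
  shows "degree (forward_diff q) < degree q"
proof -
  let ?r = "pcompose q [:1, 1:]"
  have deg_r: "degree ?r = degree q" by (simp add: degree_pcompose)
  have lead_r: "lead_coeff ?r = lead_coeff q" by (simp add: lead_coeff_comp)
  have "degree (?r - q) \<le> degree q" using degree_diff_le[of ?r "degree q" q] deg_r by simp
  moreover have "degree (?r - q) \<noteq> degree q"
  proof
    assume eq: "degree (?r - q) = degree q"
    then have "lead_coeff (?r - q) = 0" using deg_r lead_r by simp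
    then have "?r - q = 0" by (simp only: leading_coeff_0_iff)
    then show False using eq assms by simp
  qed
  ultimately show ?thesis by (simp add: forward_diff_def)
qed

text \<open>A polynomial taking the same value at all naturals is constant: a non-constant
  polynomial minus a constant has only finitely many roots.\<close>
lemma degree_0_if_const_on_nat:
  fixes q :: "int poly"
  assumes const: "\<And>k. poly q (int k) = poly q 0"
  shows "degree q = 0"
proof (rule ccontr)
  assume "degree q \<noteq> 0"
  then have "q - [:poly q 0:] \<noteq> 0" by (metis degree_pCons_0 eq_iff_diff_eq_0)
  then have "finite {x. poly (q - [:poly q 0:]) x = 0}" by (rule poly_roots_finite)
  moreover have "range int \<subseteq> {x. poly (q - [:poly q 0:]) x = 0}" using const by auto
  ultimately have "finite (range int)" by (rule finite_subset[rotated])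
  then show False using finite_imageD[of int UNIV] by simp
qed

definition quasi_norm :: "(int \<Rightarrow> real) \<Rightarrow> bool" where
  "quasi_norm D \<longleftrightarrow> (\<forall>a. D a \<ge> 0) \<and> (\<forall>a b. D (a - b) \<le> 2 * D a + 2 * D b) \<and>
                    (\<forall>c. D c = 0 \<longrightarrow> c = 0)"

lemma quasi_norm_diff_tendsto_0:
  assumes D: "quasi_norm D" and lim: "(\<lambda>k. D (x k)) \<longlonglongrightarrow> 0"
  shows "(\<lambda>k. D (x (Suc k) - x k)) \<longlonglongrightarrow> 0"
proof (rule tendsto_sandwich[of "\<lambda>_. 0" _ sequentially "\<lambda>k. 2 * D (x (Suc k)) + 2 * D (x k)"])
  show "\<forall>\<^sub>F k in sequentially. 0 \<le> D (x (Suc k) - x k)"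
    using D by (simp add: quasi_norm_def)
  show "\<forall>\<^sub>F k in sequentially. D (x (Suc k) - x k) \<le> 2 * D (x (Suc k)) + 2 * D (x k)"
    using D by (simp add: quasi_norm_def)
  have "(\<lambda>k. 2 * D (x (Suc k)) + 2 * D (x k)) \<longlonglongrightarrow> 2 * 0 + 2 * 0"
    by (intro tendsto_intros lim LIMSEQ_Suc[OF lim])
  then show "(\<lambda>k. 2 * D (x (Suc k)) + 2 * D (x k)) \<longlonglongrightarrow> 0" by simp
qed simp

lemma quasi_norm_poly_not_tendsto_0:
  fixes q :: "int poly"
  assumes D: "quasi_norm D"
  shows "degree q > 0 \<Longrightarrow> \<not> (\<lambda>k. D (poly q (int k))) \<longlonglongrightarrow> 0"
proof (induction "degree q" arbitrary: q rule: less_induct)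
  case less
  show ?case
  proof
    assume lim: "(\<lambda>k. D (poly q (int k))) \<longlonglongrightarrow> 0"
    define r where "r = forward_diff q"
    have r_values: "poly r (int k) = poly q (int (Suc k)) - poly q (int k)" for k
      by (simp add: r_def poly_forward_diff add.commute)
    have lim_r: "(\<lambda>k. D (poly r (int k))) \<longlonglongrightarrow> 0"
      unfolding r_values by (rule quasi_norm_diff_tendsto_0[OF D lim])
    have "degree r < degree q" unfolding r_def by (rule degree_forward_diff_less[OF less.prems])
    with less.hyps lim_r have "degree r = 0" by blast
    then obtain c where r_const: "r = [:c:]" by (metis degree_eq_zeroE)
    show False
    proof (cases "c = 0")
      case True
      then have "poly q (int (Suc k)) = poly q (int k)" for k using r_values[of k] r_const by simp
      then have "poly q (int k) = poly q 0" for k by (induction k) auto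
      then show False using degree_0_if_const_on_nat less.prems by simp
    next
      case False
      have "(\<lambda>k. D c) \<longlonglongrightarrow> 0" using lim_r r_const by simp
      then have "D c = 0" by (simp add: LIMSEQ_const_iff)
      then show False using D False by (simp add: quasi_norm_def)
    qed
  qed
qed

lemma norm_diff_one_sq_unit:
  fixes w :: complex
  assumes "cmod w = 1"
  shows "(cmod (w - 1))^2 = 2 - 2 * Re w"
proof -
  have "(Re w)^2 + (Im w)^2 = 1" using assms by (metis cmod_power2 one_power2)
  moreover have "(cmod (w - 1))^2 = (Re w - 1)^2 + (Im w)^2" by (simp add: cmod_power2)
  ultimately show ?thesis by (simp add: power2_eq_square algebra_simps)
qed

text \<open>The pointwise form of the quasi-subadditivity of the defect: on the circle,
  \<open>|z^(a-b) - 1| = |z^a - z^b| \<le> |z^a - 1| + |z^b - 1|\<close>, then \<open>(s+t)^2 \<le> 2s^2 + 2t^2\<close>.\<close>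
lemma powi_diff_defect_unit:
  fixes z :: complex
  assumes z: "cmod z = 1"
  shows "(cmod (z powi (a - b) - 1))^2 \<le> 2 * (cmod (z powi a - 1))^2 + 2 * (cmod (z powi b - 1))^2"
proof -
  let ?s = "cmod (z powi a - 1)" and ?t = "cmod (z powi b - 1)"
  have "z \<noteq> 0" using z by auto
  then have "z powi a - z powi b = z powi b * (z powi (a - b) - 1)"
    by (simp add: power_int_diff algebra_simps)
  then have "cmod (z powi (a - b) - 1) = cmod ((z powi a - 1) - (z powi b - 1))"
    using z by (simp add: norm_mult norm_power_int)
  also have "\<dots> \<le> ?s + ?t" by (rule norm_triangle_ineq4)
  finally have "(cmod (z powi (a - b) - 1))^2 \<le> (?s + ?t)^2" by (simp add: power_mono)
  also have "\<dots> \<le> 2 * ?s^2 + 2 * ?t^2"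
    using zero_le_power2[of "?s - ?t"] by (simp add: power2_eq_square algebra_simps)
  finally show ?thesis .
qed

lemma powi_eq_1_imp_root_of_unity:
  fixes z :: complex
  assumes "z powi a = 1"
  shows "z ^ nat \<bar>a\<bar> = 1"
proof (cases "a \<ge> 0")
  case True
  then show ?thesis using assms by (simp add: power_int_def)
next
  case False
  then have "inverse (z ^ nat (- a)) = 1" using assms by (simp add: power_int_def power_inverse)
  then show ?thesis using False by (simp add: inverse_eq_1_iff)
qed

text \<open>\<open>rigidity_defect \<sigma> m\<close> measures how far the rotation by frequency \<open>m\<close> is
  from the identity in \<open>L\<^sup>2(\<sigma>)\<close>.\<close>
definition rigidity_defect :: "complex measure \<Rightarrow> int \<Rightarrow> real" where
  "rigidity_defect \<sigma> m = (\<integral>z. (cmod (z powi m - 1))^2 \<partial>\<sigma>)"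

lemma borel_measurable_powi: "(\<lambda>z::complex. z powi n) \<in> borel_measurable borel"
  unfolding power_int_def by measurable

context
  fixes \<sigma> :: "complex measure"
  assumes cont: "continuous_prob_on_circle \<sigma>"
begin

lemma prob_space_sigma: "prob_space \<sigma>"
  using cont by (simp add: continuous_prob_on_circle_def)

lemma sets_sigma: "sets \<sigma> = sets borel"
  using cont by (simp add: continuous_prob_on_circle_def)

lemma measurable_sigma: "f \<in> borel_measurable borel \<Longrightarrow> f \<in> borel_measurable \<sigma>"
  using measurable_cong_sets[OF sets_sigma refl] by blast

lemma AE_on_circle: "AE z in \<sigma>. cmod z = 1"
proof (rule AE_I[where N="UNIV - sphere 0 1"])
  show "{x \<in> space \<sigma>. cmod x \<noteq> 1} \<subseteq> UNIV - sphere 0 1" by auto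
  show "emeasure \<sigma> (UNIV - sphere 0 1) = 0" using cont by (simp add: continuous_prob_on_circle_def)
  show "UNIV - sphere 0 1 \<in> sets \<sigma>" unfolding sets_sigma by auto
qed

lemma not_AE_finite:
  assumes "finite F"
  shows "\<not> (AE z in \<sigma>. z \<in> F)"
proof
  assume "AE z in \<sigma>. z \<in> F"
  then obtain N where N: "{x \<in> space \<sigma>. x \<notin> F} \<subseteq> N" "emeasure \<sigma> N = 0" "N \<in> sets \<sigma>"
    by (auto elim: AE_E)
  have F_sets: "F \<in> sets \<sigma>"
    using assms by (simp add: sets_sigma finite_imp_closed)
  have "emeasure \<sigma> F = (\<Sum>x\<in>F. emeasure \<sigma> {x})"
    using assms by (rule emeasure_eq_sum_singleton) (simp add: sets_sigma)
  also have "\<dots> = 0" using cont by (simp add: continuous_prob_on_circle_def)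
  finally have F0: "emeasure \<sigma> F = 0" .
  have "emeasure \<sigma> (space \<sigma>) \<le> emeasure \<sigma> (F \<union> N)"
    using N F_sets by (intro emeasure_mono) auto
  also have "\<dots> \<le> emeasure \<sigma> F + emeasure \<sigma> N"
    using N F_sets by (intro emeasure_subadditive) auto
  finally show False
    using F0 N prob_space.emeasure_space_1[OF prob_space_sigma] by simp
qed

lemma integrable_defect: "integrable \<sigma> (\<lambda>z. (cmod (z powi m - 1))^2)"
proof -
  interpret prob_space \<sigma> by (rule prob_space_sigma)
  show ?thesis
  proof (rule integrable_const_bound[where B=4])
    show "AE z in \<sigma>. norm ((cmod (z powi m - 1))^2) \<le> 4"
      using AE_on_circle
    proof eventually_elim
      case (elim z)
      then have unit: "cmod (z powi m) = 1" by (simp add: norm_power_int)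
      then have "\<bar>Re (z powi m)\<bar> \<le> 1" using abs_Re_le_cmod[of "z powi m"] by simp
      then show ?case using norm_diff_one_sq_unit[OF unit] by simp
    qed
    show "(\<lambda>z. (cmod (z powi m - 1))^2) \<in> borel_measurable \<sigma>"
      by (rule measurable_sigma) (use borel_measurable_powi[of m] in measurable)
  qed
qed

lemma integrable_powi: "integrable \<sigma> (\<lambda>z. z powi m)"
proof -
  interpret prob_space \<sigma> by (rule prob_space_sigma)
  show ?thesis
  proof (rule integrable_const_bound[where B=1])
    show "AE z in \<sigma>. norm (z powi m) \<le> 1"
      using AE_on_circle by eventually_elim (simp add: norm_power_int)
    show "(\<lambda>z. z powi m) \<in> borel_measurable \<sigma>"
      by (rule measurable_sigma) (rule borel_measurable_powi)
  qed
qed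

lemma rigidity_defect_fourier: "rigidity_defect \<sigma> m = 2 - 2 * Re (fourier_coeff \<sigma> m)"
proof -
  interpret prob_space \<sigma> by (rule prob_space_sigma)
  have "rigidity_defect \<sigma> m = (\<integral>z. 2 - 2 * Re (z powi m) \<partial>\<sigma>)"
    unfolding rigidity_defect_def
  proof (rule integral_cong_AE)
    show "(\<lambda>z. (cmod (z powi m - 1))^2) \<in> borel_measurable \<sigma>"
      by (rule measurable_sigma) (use borel_measurable_powi[of m] in measurable)
    show "(\<lambda>z. 2 - 2 * Re (z powi m)) \<in> borel_measurable \<sigma>"
      by (rule measurable_sigma) (use borel_measurable_powi[of m] in measurable)
    show "AE z in \<sigma>. (cmod (z powi m - 1))^2 = 2 - 2 * Re (z powi m)"
      using AE_on_circle by eventually_elim (simp add: norm_diff_one_sq_unit norm_power_int)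
  qed
  also have "\<dots> = 2 - 2 * Re (fourier_coeff \<sigma> m)"
    using integrable_powi[of m] by (simp add: fourier_coeff_def prob_space)
  finally show ?thesis .
qed

lemma rigidity_defect_diff:
  "rigidity_defect \<sigma> (a - b) \<le> 2 * rigidity_defect \<sigma> a + 2 * rigidity_defect \<sigma> b"
proof -
  have "rigidity_defect \<sigma> (a - b)
          \<le> (\<integral>z. 2 * (cmod (z powi a - 1))^2 + 2 * (cmod (z powi b - 1))^2 \<partial>\<sigma>)"
    unfolding rigidity_defect_def
  proof (rule integral_mono_AE)
    show "AE z in \<sigma>. (cmod (z powi (a - b) - 1))^2
                       \<le> 2 * (cmod (z powi a - 1))^2 + 2 * (cmod (z powi b - 1))^2"
      using AE_on_circle by eventually_elim (rule powi_diff_defect_unit)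
  qed (use integrable_defect[of a] integrable_defect[of b] integrable_defect[of "a - b"] in auto)
  also have "\<dots> = 2 * rigidity_defect \<sigma> a + 2 * rigidity_defect \<sigma> b"
    unfolding rigidity_defect_def using integrable_defect[of a] integrable_defect[of b] by simp
  finally show ?thesis .
qed

text \<open>No nonzero frequency is exactly rigid: \<open>D(c) = 0\<close> would put all of \<open>\<sigma>\<close> on the
  finitely many \<open>|c|\<close>-th roots of unity.\<close>
lemma rigidity_defect_eq_0_imp:
  assumes "rigidity_defect \<sigma> c = 0"
  shows "c = 0"
proof (rule ccontr)
  assume c: "c \<noteq> 0"
  interpret prob_space \<sigma> by (rule prob_space_sigma)
  have "AE z in \<sigma>. (cmod (z powi c - 1))^2 = 0"
    using assms integrable_defect[of c] unfolding rigidity_defect_def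
    by (subst (asm) integral_nonneg_eq_0_iff_AE) auto
  then have "AE z in \<sigma>. z \<in> {z. z ^ nat \<bar>c\<bar> = 1}"
    by eventually_elim (simp add: powi_eq_1_imp_root_of_unity)
  moreover have "finite {z::complex. z ^ nat \<bar>c\<bar> = 1}"
    using c by (intro finite_roots_unity) simp
  ultimately show False using not_AE_finite by blast
qed

lemma quasi_norm_rigidity_defect: "quasi_norm (rigidity_defect \<sigma>)"
  unfolding quasi_norm_def
  using rigidity_defect_diff rigidity_defect_eq_0_imp by (simp add: rigidity_defect_def)

end

theorem mainTheorem12:
  fixes p :: "int poly"
  assumes "degree p > 0"
    and "\<forall>i. coeff p i \<ge> 0"
  shows "\<not> (\<exists>\<sigma>. continuous_prob_on_circle \<sigma> \<and>
             (\<lambda>k::nat. fourier_coeff \<sigma> (poly p (int k))) \<longlonglongrightarrow> 1)"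
proof
  assume "\<exists>\<sigma>. continuous_prob_on_circle \<sigma> \<and>
             (\<lambda>k::nat. fourier_coeff \<sigma> (poly p (int k))) \<longlonglongrightarrow> 1"
  then obtain \<sigma> where cont: "continuous_prob_on_circle \<sigma>"
    and lim: "(\<lambda>k::nat. fourier_coeff \<sigma> (poly p (int k))) \<longlonglongrightarrow> 1" by blast
  have "(\<lambda>k. 2 - 2 * Re (fourier_coeff \<sigma> (poly p (int k)))) \<longlonglongrightarrow> 2 - 2 * Re 1"
    by (intro tendsto_intros lim)
  then have "(\<lambda>k. rigidity_defect \<sigma> (poly p (int k))) \<longlonglongrightarrow> 0"
    by (simp add: rigidity_defect_fourier[OF cont])
  then show False
    using quasi_norm_poly_not_tendsto_0[OF quasi_norm_rigidity_defect[OF cont] assms(1)] by blast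
qed

end
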